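(* Let $x_1,\dots,x_n\in\mathbb{R}^2$ satisfy $x_i\prec x_j$ whenever $i<j$, let $p\ge3$, $k\in\{3,\dots,p\}$ and $i\in\{k,\dots,n\}$. Suppose the values $C^{MM}_{k-1,j}$ for $j\in\{k-1,\dots,i-1\}$ are available (stored in an array with $O(1)$ access). Then $C^{MM}_{k,i}=\max_{j\in\{k-1,\dots,i-1\}}\min(C^{MM}_{k-1,j},d_{j,i})$ can be computed in $O(\log(i+1-k))$ time (by a dichotomic search on $j$).
   Context: For $y=(y^1,y^2),z=(z^1,z^2)\in\mathbb{R}^2$ write $y\prec z$ iff $y^1<z^1$ and $y^2>z^2$. Fix $\alpha>0$, let $d$ be the Euclidean distance, and set $d_{ij}=d(x_i,x_j)^\alpha$. For $k\ge2$ and $i\ge k$, $C^{MM}_{k,i}$ denotes the optimal value of the Max-Min $k$-dispersion problem among $x_1,\dots,x_i$: $C^{MM}_{k,i}=\max_{1\le i_1<\dots<i_k\le i}\min_{1\le a<b\le k}d_{i_a,i_b}$. Time is measured in a model where arithmetic operations, comparisons and evaluation of $d(\cdot,\cdot)^\alpha$ take $O(1)$ time. *)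

theory Defs
  imports "HOL-Analysis.Analysis"
begin

text \<open>Points of R^2 are modelled as real \<times> real; dist on the product is the Euclidean distance.\<close>

definition prec :: "real \<times> real \<Rightarrow> real \<times> real \<Rightarrow> bool" where
  "prec y z \<longleftrightarrow> fst y < fst z \<and> snd y > snd z"

definition dd :: "real \<Rightarrow> (nat \<Rightarrow> real \<times> real) \<Rightarrow> nat \<Rightarrow> nat \<Rightarrow> real" where
  "dd \<alpha> x a b = dist (x a) (x b) powr \<alpha>"

definition CMM :: "real \<Rightarrow> (nat \<Rightarrow> real \<times> real) \<Rightarrow> nat \<Rightarrow> nat \<Rightarrow> real" where
  "CMM \<alpha> x k i = Max ((\<lambda>S. Min {dd \<alpha> x a b | a b. a \<in> S \<and> b \<in> S \<and> a < b})
                       ` {S. S \<subseteq> {1..i} \<and> card S = k})"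

text \<open>Dichotomic search with a step counter (each iteration: O(1) array accesses,
  distance evaluations, comparisons and arithmetic, counted as one step).
  bsearch A D lo hi returns the least j in [lo,hi) with D j \<le> A j (or hi if none),
  together with the number of steps performed.\<close>
function bsearch :: "(nat \<Rightarrow> real) \<Rightarrow> (nat \<Rightarrow> real) \<Rightarrow> nat \<Rightarrow> nat \<Rightarrow> nat \<times> nat" where
  "bsearch A D lo hi =
     (if lo < hi then
        (let m = (lo + hi) div 2 in
         if D m \<le> A m then (case bsearch A D lo m of (r, t) \<Rightarrow> (r, t + 1))
         else (case bsearch A D (m + 1) hi of (r, t) \<Rightarrow> (r, t + 1)))
      else (lo, 1))"
  by pat_completeness auto
termination
  by (relation "Wellfounded.measure (\<lambda>(A, D, lo, hi). hi - lo)") auto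

text \<open>Computes max_{a \<le> j \<le> b} min (A j) (D j) by dichotomy, returning (value, steps).\<close>
definition maxmin_dicho :: "(nat \<Rightarrow> real) \<Rightarrow> (nat \<Rightarrow> real) \<Rightarrow> nat \<Rightarrow> nat \<Rightarrow> real \<times> nat" where
  "maxmin_dicho A D a b =
     (case bsearch A D a (b + 1) of (j0, t) \<Rightarrow>
        (if b < j0 then min (A b) (D b)
         else if j0 = a then min (A a) (D a)
         else max (min (A j0) (D j0)) (min (A (j0 - 1)) (D (j0 - 1))),
         t + 1))"

end

theory Submission
  imports Defs
begin

(* Take an optimal k-subset of {1..i} (k >= 3), let s be its largest and j its second largest index.
   Along a prec-chain, d(x_a, x_s) shrinks as a grows and grows with s, so the pairs containing s
   contribute exactly d_{j,s} <= d_{j,i}, and the remaining (k-1)-subset of {1..j} contributes at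
   most C_{k-1,j}; conversely adding x_i to an optimal (k-1)-subset of {1..j} achieves
   min(C_{k-1,j}, d_{j,i}).  In j, C_{k-1,j} is nondecreasing and d_{j,i}
   nonincreasing, so min(C_{k-1,j}, d_{j,i}) peaks where the two sequences cross; a binary search
   for the crossing index halves the search interval at each step. *)

lemma dist_inner_le_dist_outer:
  fixes p q r :: "real \<times> real"
  assumes "fst p \<le> fst q" "fst q \<le> fst r" "snd q \<le> snd p" "snd r \<le> snd q"
  shows "dist q r \<le> dist p r" and "dist p q \<le> dist p r"
proof -
  obtain p1 p2 q1 q2 r1 r2 where pqr: "p = (p1, p2)" "q = (q1, q2)" "r = (r1, r2)"
    by (metis prod.collapse)
  have "(dist q1 r1)\<^sup>2 \<le> (dist p1 r1)\<^sup>2" "(dist q2 r2)\<^sup>2 \<le> (dist p2 r2)\<^sup>2"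
    "(dist p1 q1)\<^sup>2 \<le> (dist p1 r1)\<^sup>2" "(dist p2 q2)\<^sup>2 \<le> (dist p2 r2)\<^sup>2"
    using assms pqr by (auto simp: dist_real_def intro!: power_mono)
  then show "dist q r \<le> dist p r" "dist p q \<le> dist p r"
    unfolding pqr dist_Pair_Pair by (simp_all add: add_mono)
qed

definition prec_chain :: "(nat \<Rightarrow> real \<times> real) \<Rightarrow> nat \<Rightarrow> bool" where
  "prec_chain x n \<longleftrightarrow> (\<forall>a b. 1 \<le> a \<longrightarrow> a < b \<longrightarrow> b \<le> n \<longrightarrow> prec (x a) (x b))"

lemma prec_chain_le_components:
  assumes "prec_chain x n" "1 \<le> a" "a \<le> b" "b \<le> n"
  shows "fst (x a) \<le> fst (x b)" "snd (x b) \<le> snd (x a)"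
proof -
  have "a = b \<or> prec (x a) (x b)"
    using assms unfolding prec_chain_def by (auto simp: le_less)
  then show "fst (x a) \<le> fst (x b)" "snd (x b) \<le> snd (x a)"
    by (auto simp: prec_def)
qed

lemma dd_antimono_left:
  assumes "prec_chain x n" "0 \<le> \<alpha>" "1 \<le> a" "a \<le> b" "b \<le> c" "c \<le> n"
  shows "dd \<alpha> x b c \<le> dd \<alpha> x a c"
proof -
  have "dist (x b) (x c) \<le> dist (x a) (x c)"
    using assms by (intro dist_inner_le_dist_outer prec_chain_le_components[OF assms(1)]) auto
  then show ?thesis unfolding dd_def using assms(2) by (intro powr_mono2) auto
qed

lemma dd_mono_right:
  assumes "prec_chain x n" "0 \<le> \<alpha>" "1 \<le> a" "a \<le> b" "b \<le> c" "c \<le> n"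
  shows "dd \<alpha> x a b \<le> dd \<alpha> x a c"
proof -
  have "dist (x a) (x b) \<le> dist (x a) (x c)"
    using assms by (intro dist_inner_le_dist_outer prec_chain_le_components[OF assms(1)]) auto
  then show ?thesis unfolding dd_def using assms(2) by (intro powr_mono2) auto
qed

definition dispersion :: "real \<Rightarrow> (nat \<Rightarrow> real \<times> real) \<Rightarrow> nat set \<Rightarrow> real" where
  "dispersion \<alpha> x S = Min {dd \<alpha> x a b | a b. a \<in> S \<and> b \<in> S \<and> a < b}"

lemma finite_pair_distances:
  assumes "finite S"
  shows "finite {dd \<alpha> x a b | a b. a \<in> S \<and> b \<in> S \<and> a < b}"
proof -
  have "{dd \<alpha> x a b | a b. a \<in> S \<and> b \<in> S \<and> a < b} \<subseteq> (\<lambda>(a, b). dd \<alpha> x a b) ` (S \<times> S)"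
    by auto
  then show ?thesis using assms by (meson finite_SigmaI finite_imageI finite_subset)
qed

lemma dispersion_le:
  "finite S \<Longrightarrow> a \<in> S \<Longrightarrow> b \<in> S \<Longrightarrow> a < b \<Longrightarrow> dispersion \<alpha> x S \<le> dd \<alpha> x a b"
  unfolding dispersion_def by (rule Min_le) (auto intro: finite_pair_distances)

lemma two_le_card_obtains_less:
  fixes S :: "'a :: linorder set"
  assumes "finite S" "2 \<le> card S"
  obtains a b where "a \<in> S" "b \<in> S" "a < b"
proof -
  obtain a b where "a \<in> S" "b \<in> S" "a \<noteq> b"
    using assms card_le_Suc0_iff_eq[OF assms(1)] by force
  then show ?thesis using that by (cases "a < b") (auto simp: neq_iff)
qed

lemma le_dispersion:
  assumes "finite S" "2 \<le> card S" "\<And>a b. a \<in> S \<Longrightarrow> b \<in> S \<Longrightarrow> a < b \<Longrightarrow> v \<le> dd \<alpha> x a b"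
  shows "v \<le> dispersion \<alpha> x S"
proof -
  obtain a b where "a \<in> S" "b \<in> S" "a < b"
    using two_le_card_obtains_less[OF assms(1,2)] .
  then show ?thesis
    unfolding dispersion_def using assms by (subst Min_ge_iff) (auto intro: finite_pair_distances)
qed

lemma dispersion_antimono:
  assumes "S \<subseteq> T" "finite T" "2 \<le> card S"
  shows "dispersion \<alpha> x T \<le> dispersion \<alpha> x S"
  using assms by (intro le_dispersion dispersion_le) (auto intro: finite_subset)

lemma dispersion_insert_greater:
  assumes "prec_chain x n" "0 \<le> \<alpha>" "finite S" "2 \<le> card S" "\<forall>a \<in> S. 1 \<le> a"
    and "Max S < s" "s \<le> n"
  shows "dispersion \<alpha> x (insert s S) = min (dispersion \<alpha> x S) (dd \<alpha> x (Max S) s)"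
proof (rule antisym)
  have "S \<noteq> {}" using assms(4) by auto
  then have max_in: "Max S \<in> S" using assms(3) by simp
  show "dispersion \<alpha> x (insert s S) \<le> min (dispersion \<alpha> x S) (dd \<alpha> x (Max S) s)"
    using assms max_in by (auto intro: dispersion_antimono dispersion_le)
  show "min (dispersion \<alpha> x S) (dd \<alpha> x (Max S) s) \<le> dispersion \<alpha> x (insert s S)"
  proof (rule le_dispersion)
    fix a b assume ab: "a \<in> insert s S" "b \<in> insert s S" "a < b"
    show "min (dispersion \<alpha> x S) (dd \<alpha> x (Max S) s) \<le> dd \<alpha> x a b"
    proof (cases "b = s")
      case True
      then have "a \<in> S" using ab by auto
      then have "dd \<alpha> x (Max S) s \<le> dd \<alpha> x a s"
        using assms by (intro dd_antimono_left[OF assms(1,2)]) auto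
      then show ?thesis using True by simp
    next
      case False
      then have "b \<in> S" using ab by simp
      moreover have "a \<in> S" using ab Max_ge[OF assms(3) \<open>b \<in> S\<close>] assms(6) by auto
      ultimately have "dispersion \<alpha> x S \<le> dd \<alpha> x a b" using dispersion_le[OF assms(3)] ab(3) by simp
      then show ?thesis by simp
    qed
  qed (use assms in \<open>auto simp: card_insert_if\<close>)
qed

lemma CMM_eq_Max_dispersion:
  "CMM \<alpha> x k i = Max (dispersion \<alpha> x ` {S. S \<subseteq> {1..i} \<and> card S = k})"
  unfolding CMM_def dispersion_def by simp

lemma finite_subsets_of_card: "finite {S. S \<subseteq> {1..i::nat} \<and> card S = k}"
  by (rule finite_subset[of _ "Pow {1..i}"]) auto

lemma dispersion_le_CMM: "S \<subseteq> {1..i} \<Longrightarrow> card S = k \<Longrightarrow> dispersion \<alpha> x S \<le> CMM \<alpha> x k i"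
  unfolding CMM_eq_Max_dispersion by (rule Max_ge) (auto intro: finite_subsets_of_card)

lemma CMM_attained:
  assumes "k \<le> i"
  obtains S where "S \<subseteq> {1..i}" "card S = k" "CMM \<alpha> x k i = dispersion \<alpha> x S"
proof -
  have "{1..k} \<in> {S. S \<subseteq> {1..i} \<and> card S = k}" using assms by auto
  then have "dispersion \<alpha> x ` {S. S \<subseteq> {1..i} \<and> card S = k} \<noteq> {}" by blast
  then have "CMM \<alpha> x k i \<in> dispersion \<alpha> x ` {S. S \<subseteq> {1..i} \<and> card S = k}"
    unfolding CMM_eq_Max_dispersion by (intro Max_in finite_imageI finite_subsets_of_card)
  then show ?thesis using that by blast
qed

lemma CMM_mono:
  assumes "k \<le> u" "u \<le> v"
  shows "CMM \<alpha> x k u \<le> CMM \<alpha> x k v"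
proof -
  obtain S where S: "S \<subseteq> {1..u}" "card S = k" "CMM \<alpha> x k u = dispersion \<alpha> x S"
    using CMM_attained[OF assms(1)] .
  then have "S \<subseteq> {1..v}" using assms(2) by auto
  then show ?thesis using dispersion_le_CMM S(2,3) by simp
qed

lemma min_CMM_dd_le_CMM_Suc:
  assumes "prec_chain x n" "0 \<le> \<alpha>" "2 \<le> k" "k \<le> j" "j < i" "i \<le> n"
  shows "min (CMM \<alpha> x k j) (dd \<alpha> x j i) \<le> CMM \<alpha> x (Suc k) i"
proof -
  obtain S where S: "S \<subseteq> {1..j}" "card S = k" "CMM \<alpha> x k j = dispersion \<alpha> x S"
    using CMM_attained[OF assms(4)] .
  have fin: "finite S" using S(1) finite_subset by blast
  have "S \<noteq> {}" using S(2) assms(3) by auto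
  then have "Max S \<in> S" using fin by simp
  then have max_S: "1 \<le> Max S" "Max S \<le> j" using S(1) by auto
  have "min (CMM \<alpha> x k j) (dd \<alpha> x j i) \<le> min (dispersion \<alpha> x S) (dd \<alpha> x (Max S) i)"
    using S(3) dd_antimono_left[OF assms(1,2) max_S less_imp_le[OF assms(5)] assms(6)] by simp
  also have "\<dots> = dispersion \<alpha> x (insert i S)"
    using S assms max_S fin by (intro dispersion_insert_greater[symmetric]) auto
  also have "\<dots> \<le> CMM \<alpha> x (Suc k) i"
  proof (rule dispersion_le_CMM)
    have "i \<notin> S" using S(1) assms(5) by auto
    then show "card (insert i S) = Suc k" using S(2) fin by simp
  qed (use S(1) assms(5) in auto)
  finally show ?thesis .
qed

lemma CMM_Suc_le_min_CMM_dd: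
  assumes "prec_chain x n" "0 \<le> \<alpha>" "2 \<le> k" "Suc k \<le> i" "i \<le> n"
  obtains j where "k \<le> j" "j < i" "CMM \<alpha> x (Suc k) i \<le> min (CMM \<alpha> x k j) (dd \<alpha> x j i)"
proof -
  obtain S where S: "S \<subseteq> {1..i}" "card S = Suc k" "CMM \<alpha> x (Suc k) i = dispersion \<alpha> x S"
    using CMM_attained[OF assms(4)] .
  have fin: "finite S" using S(1) finite_subset by blast
  define s where "s = Max S"
  define S' where "S' = S - {s}"
  have "S \<noteq> {}" using S(2) by auto
  then have s: "s \<in> S" "s \<le> i" using S(1) fin by (auto simp: s_def)
  have S': "finite S'" "card S' = k" "S = insert s S'" using S(2) fin s(1) by (auto simp: S'_def)
  have "S' \<noteq> {}" using S'(2) assms(3) by auto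
  define j where "j = Max S'"
  have "j \<in> S'" using S'(1) \<open>S' \<noteq> {}\<close> by (simp add: j_def)
  then have j: "j \<in> S'" "j < s" using Max_ge[OF fin, of j] by (auto simp: S'_def s_def)
  have S'_sub: "S' \<subseteq> {1..j}"
  proof
    fix a assume a: "a \<in> S'"
    then have "a \<in> S" by (simp add: S'_def)
    then show "a \<in> {1..j}" using S(1) Max_ge[OF S'(1) a] by (auto simp: j_def)
  qed
  have "k \<le> j" using card_mono[OF _ S'_sub] S'(2) by simp
  have "CMM \<alpha> x (Suc k) i = min (dispersion \<alpha> x S') (dd \<alpha> x j s)"
    using S(3) S' S(1) assms j s by (simp add: dispersion_insert_greater[of x n] j_def subset_iff)
  also have "\<dots> \<le> min (CMM \<alpha> x k j) (dd \<alpha> x j i)"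
    using dispersion_le_CMM[OF S'_sub S'(2)] dd_mono_right[OF assms(1,2) _ _ s(2) assms(5)] j S'_sub
    by (intro min.mono) auto
  finally show ?thesis using that \<open>k \<le> j\<close> j s by simp
qed

lemma CMM_Suc_eq_Max:
  assumes "prec_chain x n" "0 \<le> \<alpha>" "2 \<le> k" "Suc k \<le> i" "i \<le> n"
  shows "CMM \<alpha> x (Suc k) i = Max ((\<lambda>j. min (CMM \<alpha> x k j) (dd \<alpha> x j i)) ` {k..i - 1})"
proof (rule antisym)
  obtain j where j: "k \<le> j" "j < i" and le: "CMM \<alpha> x (Suc k) i \<le> min (CMM \<alpha> x k j) (dd \<alpha> x j i)"
    using CMM_Suc_le_min_CMM_dd[OF assms] .
  note le
  also have "\<dots> \<le> Max ((\<lambda>j. min (CMM \<alpha> x k j) (dd \<alpha> x j i)) ` {k..i - 1})"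
    using j by (intro Max_ge) auto
  finally show "CMM \<alpha> x (Suc k) i \<le> Max ((\<lambda>j. min (CMM \<alpha> x k j) (dd \<alpha> x j i)) ` {k..i - 1})" .
next
  show "Max ((\<lambda>j. min (CMM \<alpha> x k j) (dd \<alpha> x j i)) ` {k..i - 1}) \<le> CMM \<alpha> x (Suc k) i"
    using assms by (auto intro!: min_CMM_dd_le_CMM_Suc)
qed

declare bsearch.simps[simp del]

lemma bsearch_empty: "hi \<le> lo \<Longrightarrow> bsearch A D lo hi = (lo, 1)"
  by (subst bsearch.simps) simp

lemma bsearch_left:
  "lo < hi \<Longrightarrow> m = (lo + hi) div 2 \<Longrightarrow> D m \<le> A m \<Longrightarrow>
    bsearch A D lo hi = apsnd Suc (bsearch A D lo m)"
  by (subst bsearch.simps) (simp add: Let_def split: prod.split)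

lemma bsearch_right:
  "lo < hi \<Longrightarrow> m = (lo + hi) div 2 \<Longrightarrow> \<not> D m \<le> A m \<Longrightarrow>
    bsearch A D lo hi = apsnd Suc (bsearch A D (m + 1) hi)"
  by (subst bsearch.simps) (simp add: Let_def split: prod.split)

definition is_threshold :: "(nat \<Rightarrow> bool) \<Rightarrow> nat \<Rightarrow> nat \<Rightarrow> nat \<Rightarrow> bool" where
  "is_threshold P lo hi r \<longleftrightarrow> lo \<le> r \<and> r \<le> hi \<and> (\<forall>j. lo \<le> j \<longrightarrow> j < hi \<longrightarrow> (P j \<longleftrightarrow> r \<le> j))"

lemma is_threshold_extend_above:
  assumes "is_threshold P lo m r" "m \<le> hi" "\<And>j. m \<le> j \<Longrightarrow> j < hi \<Longrightarrow> P j"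
  shows "is_threshold P lo hi r"
  using assms unfolding is_threshold_def by (meson le_trans not_le)

lemma is_threshold_extend_below:
  assumes "is_threshold P m hi r" "lo \<le> m" "\<And>j. lo \<le> j \<Longrightarrow> j < m \<Longrightarrow> \<not> P j"
  shows "is_threshold P lo hi r"
  using assms unfolding is_threshold_def by (meson le_trans not_le)

lemma bsearch_threshold:
  assumes "\<And>u v. lo \<le> u \<Longrightarrow> u \<le> v \<Longrightarrow> v < hi \<Longrightarrow> D u \<le> A u \<Longrightarrow> D v \<le> A v"
    and "lo \<le> hi"
  shows "is_threshold (\<lambda>j. D j \<le> A j) lo hi (fst (bsearch A D lo hi))"
  using assms
proof (induction A D lo hi rule: bsearch.induct)
  case (1 A D lo hi)
  show ?case
  proof (cases "lo < hi")
    case False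
    then show ?thesis using "1.prems"(2) by (simp add: bsearch_empty is_threshold_def)
  next
    case True
    define m where "m = (lo + hi) div 2"
    have m: "lo \<le> m" "m < hi" using True by (auto simp: m_def)
    show ?thesis
    proof (cases "D m \<le> A m")
      case Pm: True
      have "is_threshold (\<lambda>j. D j \<le> A j) lo m (fst (bsearch A D lo m))"
      proof (rule "1.IH"(1)[OF True m_def Pm])
        show "D v \<le> A v" if "lo \<le> u" "u \<le> v" "v < m" "D u \<le> A u" for u v
          using "1.prems"(1)[OF that(1,2) _ that(4)] that(3) m(2) by simp
      qed (use m in simp)
      then have "is_threshold (\<lambda>j. D j \<le> A j) lo hi (fst (bsearch A D lo m))"
        by (rule is_threshold_extend_above) (use "1.prems"(1)[OF m(1) _ _ Pm] m in auto)
      then show ?thesis using bsearch_left[where A = A and D = D, OF True m_def Pm] by simp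
    next
      case nPm: False
      have "is_threshold (\<lambda>j. D j \<le> A j) (m + 1) hi (fst (bsearch A D (m + 1) hi))"
      proof (rule "1.IH"(2)[OF True m_def nPm])
        show "D v \<le> A v" if "m + 1 \<le> u" "u \<le> v" "v < hi" "D u \<le> A u" for u v
          using "1.prems"(1)[OF _ that(2-4)] that(1) m(1) by simp
      qed (use m in simp)
      then have "is_threshold (\<lambda>j. D j \<le> A j) lo hi (fst (bsearch A D (m + 1) hi))"
        by (rule is_threshold_extend_below) (use "1.prems"(1)[OF _ _ m(2)] nPm m in force)+
      then show ?thesis using bsearch_right[where A = A and D = D, OF True m_def nPm] by simp
    qed
  qed
qed

lemma bsearch_steps: "2 ^ snd (bsearch A D lo hi) \<le> max 2 (4 * (hi - lo))"
proof (induction A D lo hi rule: bsearch.induct)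
  case (1 A D lo hi)
  show ?case
  proof (cases "lo < hi")
    case False
    then show ?thesis by (simp add: bsearch_empty)
  next
    case True
    define m where "m = (lo + hi) div 2"
    have halves: "2 * (m - lo) \<le> hi - lo" "2 * (hi - (m + 1)) \<le> hi - lo"
      by (auto simp: m_def)
    have halving_step: "2 ^ Suc t \<le> max 2 (4 * (hi - lo))"
      if "2 ^ t \<le> max 2 (4 * L)" "2 * L \<le> hi - lo" for t L :: nat
      using that True by (cases "L = 0") (auto simp: max_def)
    show ?thesis
    proof (cases "D m \<le> A m")
      case Pm: True
      show ?thesis
        using halving_step[OF "1.IH"(1)[OF True m_def Pm] halves(1)]
          bsearch_left[where A = A and D = D, OF True m_def Pm] by simp
    next
      case nPm: False
      show ?thesis
        using halving_step[OF "1.IH"(2)[OF True m_def nPm] halves(2)]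
          bsearch_right[where A = A and D = D, OF True m_def nPm] by simp
    qed
  qed
qed

lemma min_le_min_at_threshold:
  fixes A D :: "nat \<Rightarrow> real"
  assumes "is_threshold (\<lambda>j. D j \<le> A j) a (Suc b) j0"
    and "mono_on {a..b} A" "antimono_on {a..b} D" "a \<le> j" "j \<le> b"
  shows "j < j0 \<Longrightarrow> min (A j) (D j) \<le> min (A (j0 - 1)) (D (j0 - 1))"
    and "j0 \<le> j \<Longrightarrow> min (A j) (D j) \<le> min (A j0) (D j0)"
proof -
  note threshold = assms(1)[unfolded is_threshold_def]
  show "min (A j) (D j) \<le> min (A (j0 - 1)) (D (j0 - 1))" if "j < j0"
  proof -
    have "a \<le> j0 - 1" "j \<le> j0 - 1" "j0 - 1 \<le> b" using that threshold assms(4) by auto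
    moreover have "\<not> D j \<le> A j" "\<not> D (j0 - 1) \<le> A (j0 - 1)"
      using threshold that assms(4,5) calculation by auto
    ultimately show ?thesis
      using mono_onD[OF assms(2), of j "j0 - 1"] assms(4) by (auto simp: min_def)
  qed
  show "min (A j) (D j) \<le> min (A j0) (D j0)" if "j0 \<le> j"
  proof -
    have "min (A j) (D j) = D j" "min (A j0) (D j0) = D j0"
      using threshold that assms(4,5) by auto
    then show ?thesis using monotone_onD[OF assms(3), of j0 j] that assms(5) threshold by simp
  qed
qed

\<comment> \<open>Below the threshold the minimum is the nondecreasing \<open>A\<close>, from it on the nonincreasing
  \<open>D\<close>, so the maximum sits at one of the two indices next to the threshold.\<close>
lemma maxmin_dicho_eq_Max:
  assumes "a \<le> b" "mono_on {a..b} A" "antimono_on {a..b} D"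
  shows "fst (maxmin_dicho A D a b) = Max ((\<lambda>j. min (A j) (D j)) ` {a..b})"
proof -
  define f where "f j = min (A j) (D j)" for j
  define j0 where "j0 = fst (bsearch A D a (Suc b))"
  have threshold: "is_threshold (\<lambda>j. D j \<le> A j) a (Suc b) j0"
    unfolding j0_def
  proof (rule bsearch_threshold)
    show "D v \<le> A v" if "a \<le> u" "u \<le> v" "v < Suc b" "D u \<le> A u" for u v
      using mono_onD[OF assms(2), of u v] monotone_onD[OF assms(3), of u v] that by simp
  qed (use assms(1) in simp)
  then have j0: "a \<le> j0" "j0 \<le> Suc b" by (simp_all add: is_threshold_def)
  have result: "fst (maxmin_dicho A D a b) =
      (if b < j0 then f b else if j0 = a then f a else max (f j0) (f (j0 - 1)))"
    unfolding maxmin_dicho_def j0_def f_def by (simp split: prod.split)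
  have "f j \<le> fst (maxmin_dicho A D a b)" if "a \<le> j" "j \<le> b" for j
  proof (cases "j < j0")
    case True
    then have "f j \<le> f (j0 - 1)"
      using min_le_min_at_threshold(1)[OF threshold assms(2,3) that] by (simp add: f_def)
    moreover have "b < j0 \<Longrightarrow> j0 - 1 = b" using j0(2) by simp
    ultimately show ?thesis using True that unfolding result by auto
  next
    case False
    then have "f j \<le> f j0"
      using min_le_min_at_threshold(2)[OF threshold assms(2,3) that] by (simp add: f_def)
    then show ?thesis using False that unfolding result by auto
  qed
  moreover have "fst (maxmin_dicho A D a b) \<in> f ` {a..b}"
  proof -
    have "j0 - 1 \<in> {a..b}" "j0 \<in> {a..b}" if "a < j0" "j0 \<le> b" using that by auto
    then show ?thesis unfolding result using assms(1) j0 by (auto simp: max_def)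
  qed
  ultimately show ?thesis unfolding f_def[abs_def] by (intro Max_eqI[symmetric]) auto
qed

lemma maxmin_dicho_steps:
  assumes "a \<le> b"
  shows "real (snd (maxmin_dicho A D a b)) \<le> 3 * (1 + log 2 (real (b + 1 - a)))"
proof -
  define N where "N = b + 1 - a"
  define t where "t = snd (bsearch A D a (Suc b))"
  have N: "1 \<le> N" using assms by (simp add: N_def)
  have steps: "snd (maxmin_dicho A D a b) = Suc t"
    unfolding maxmin_dicho_def t_def by (simp split: prod.split)
  have "2 ^ t \<le> 4 * N"
    using bsearch_steps[of A D a "Suc b"] N unfolding t_def N_def by simp
  then have "real t \<le> log 2 (real (4 * N))" by (rule le_log2_of_power)
  also have "\<dots> = 2 + log 2 (real N)"
    using N log_pow_cancel[of 2 2] by (simp add: log_mult)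
  finally have "real t \<le> 2 + log 2 (real N)" .
  moreover have "0 \<le> log 2 (real N)" using N by simp
  ultimately show ?thesis unfolding steps N_def[symmetric] by simp
qed

theorem proposition10:
  "\<exists>K::real. \<forall>(\<alpha>::real) (x::nat \<Rightarrow> real \<times> real) (n::nat) (p::nat) (k::nat) (i::nat)
      (A::nat \<Rightarrow> real).
     \<alpha> > 0 \<longrightarrow>
     (\<forall>a b. 1 \<le> a \<longrightarrow> a < b \<longrightarrow> b \<le> n \<longrightarrow> prec (x a) (x b)) \<longrightarrow>
     3 \<le> p \<longrightarrow> 3 \<le> k \<longrightarrow> k \<le> p \<longrightarrow> k \<le> i \<longrightarrow> i \<le> n \<longrightarrow>
     (\<forall>j \<in> {k - 1..i - 1}. A j = CMM \<alpha> x (k - 1) j) \<longrightarrow>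
     CMM \<alpha> x k i = Max ((\<lambda>j. min (CMM \<alpha> x (k - 1) j) (dd \<alpha> x j i)) ` {k - 1..i - 1}) \<and>
     fst (maxmin_dicho A (\<lambda>j. dd \<alpha> x j i) (k - 1) (i - 1)) = CMM \<alpha> x k i \<and>
     real (snd (maxmin_dicho A (\<lambda>j. dd \<alpha> x j i) (k - 1) (i - 1)))
       \<le> K * (1 + log 2 (real (i + 1 - k)))"
proof (rule exI[of _ 3], intro allI impI conjI)
  fix \<alpha> :: real and x :: "nat \<Rightarrow> real \<times> real" and n p k i :: nat and A :: "nat \<Rightarrow> real"
  assume "\<alpha> > 0" and "\<forall>a b. 1 \<le> a \<longrightarrow> a < b \<longrightarrow> b \<le> n \<longrightarrow> prec (x a) (x b)"
    and "3 \<le> p" "3 \<le> k" "k \<le> p" "k \<le> i" "i \<le> n"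
    and A: "\<forall>j \<in> {k - 1..i - 1}. A j = CMM \<alpha> x (k - 1) j"
  then have setting: "prec_chain x n" "0 \<le> \<alpha>" "2 \<le> k - 1" "Suc (k - 1) \<le> i" "i \<le> n"
    by (simp_all add: prec_chain_def)
  show recursion: "CMM \<alpha> x k i = Max ((\<lambda>j. min (CMM \<alpha> x (k - 1) j) (dd \<alpha> x j i)) ` {k - 1..i - 1})"
    using CMM_Suc_eq_Max[OF setting] \<open>3 \<le> k\<close> by (simp add: Suc_diff_Suc)
  have "fst (maxmin_dicho A (\<lambda>j. dd \<alpha> x j i) (k - 1) (i - 1))
      = Max ((\<lambda>j. min (A j) (dd \<alpha> x j i)) ` {k - 1..i - 1})"
  proof (rule maxmin_dicho_eq_Max)
    show "mono_on {k - 1..i - 1} A"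
      using A CMM_mono by (intro mono_onI) auto
    show "antimono_on {k - 1..i - 1} (\<lambda>j. dd \<alpha> x j i)"
      using dd_antimono_left[OF setting(1,2)] setting by (intro monotone_onI) auto
  qed (use setting in simp)
  also have "\<dots> = CMM \<alpha> x k i"
    unfolding recursion using A by (intro arg_cong[where f = Max] image_cong) auto
  finally show "fst (maxmin_dicho A (\<lambda>j. dd \<alpha> x j i) (k - 1) (i - 1)) = CMM \<alpha> x k i" .
  show "real (snd (maxmin_dicho A (\<lambda>j. dd \<alpha> x j i) (k - 1) (i - 1)))
      \<le> 3 * (1 + log 2 (real (i + 1 - k)))"
    using maxmin_dicho_steps[of "k - 1" "i - 1"] setting by simp
qed

end
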